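(* Fix $\nu\in\mathbb{R}$. For real $\varepsilon$ with $0<\varepsilon<1$ and $\frac{1}{\sqrt{\varepsilon}}-\nu\in 2\mathbb{N}$, define $$d^L_2(\varepsilon)=\Big(-\frac{1}{2\sqrt{\varepsilon}}\Big)^{1-\nu}\frac{\Gamma\big(\frac{1}{2\sqrt{\varepsilon}}+\frac{\nu}{2}\big)}{\Gamma(\nu)\,\Gamma\big(\frac{1}{2\sqrt{\varepsilon}}-\frac{\nu}{2}+1\big)},\qquad d^R_3(\varepsilon)=-\frac12\Big(\frac{1}{2\sqrt{\varepsilon}}\Big)^{1-\nu}\frac{\Gamma\big(\frac{1}{2\sqrt{\varepsilon}}+\frac{\nu}{2}\big)}{\Gamma(\nu)\,\Gamma\big(\frac{1}{2\sqrt{\varepsilon}}-\frac{\nu}{2}+1\big)},$$ and the nilpotent matrices $T_L=d^L_2(\varepsilon)E_{12}$, $T_R=d^R_3(\varepsilon)E_{13}$. Then, as $\sqrt{\varepsilon}\to 0$ along such values of $\varepsilon$, $$e^{2\pi i T_L}\longrightarrow St_\pi=\begin{pmatrix}1&-\frac{2\pi i\,e^{-\pi i\nu}}{\Gamma(\nu)}&0\\0&1&0\\0&0&1\end{pmatrix},\qquad e^{2\pi i T_R}\longrightarrow St_0=\begin{pmatrix}1&0&-\frac{\pi i}{\Gamma(\nu)}\\0&1&0\\0&0&1\end{pmatrix}.$$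
   Context: $E_{ij}$ denotes the $3\times3$ matrix unit with $1$ in position $(i,j)$. $1/\Gamma$ denotes the (entire) reciprocal Gamma function, and for $w>0$, $(-w)^{1-\nu}:=e^{i\pi(1-\nu)}w^{1-\nu}$. $\mathbb{N}$ denotes the positive integers. Interpretation: the initial equation is $L_3L_2L_1y=0$ with $L_1=\partial-\frac1{x^2}$, $L_2=\partial-\frac{\nu-2}{x}-\frac{2}{x^2}$, $L_3=\partial-\frac{\nu-4}{x}$, $\partial=d/dx$; it has an irregular singularity of Poincaré rank 1 at $0$, and $St_0$, $St_\pi$ are its Stokes matrices at the singular directions $0$ and $\pi$ (with respect to the Borel-summed Hukuhara–Turrittin fundamental matrix). The perturbed equation is $L_3(\varepsilon)L_2(\varepsilon)L_1(\varepsilon)y=0$ with $L_1(\varepsilon)=\partial-\frac{1}{x^2-\varepsilon}$, $L_2(\varepsilon)=\partial-\frac{(\nu-2)x+2}{x^2-\varepsilon}$, $L_3(\varepsilon)=\partial-\frac{(\nu-4)x}{x^2-\varepsilon}$, with Fuchsian singularities $x_L=-\sqrt{\varepsilon}$, $x_R=\sqrt{\varepsilon}$; the numbers $d^L_2$ and $d^R_3$ are the coefficients of the logarithmic terms of its solutions at $x_L$ and $x_R$, namely $d^L_2=\operatorname{Res}_{x=x_L}\frac{(x-\sqrt\varepsilon)^{\frac1{2\sqrt\varepsilon}+\frac{\nu-2}{2}}}{(x+\sqrt\varepsilon)^{\frac1{2\sqrt\varepsilon}-\frac{\nu-2}{2}}}$ and $d^R_3=-\frac12\operatorname{Res}_{x=x_R}\frac{(x+\sqrt\varepsilon)^{\frac1{2\sqrt\varepsilon}+\frac{\nu-2}{2}}}{(x-\sqrt\varepsilon)^{\frac1{2\sqrt\varepsilon}-\frac{\nu-2}{2}}}$,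 and the monodromy matrices of the perturbed equation around $x_j$ are $e^{\pi i(\Lambda+Q/x_j)}e^{2\pi i T_j}$ with $\Lambda=\mathrm{diag}(0,\nu-2,\nu-4)$, $Q=\mathrm{diag}(1,2,0)$. *)

theory Defs
  imports "HOL-Analysis.Analysis"
begin

type_synonym cmat3 = "complex ^ 3 ^ 3"

text \<open>Rows and columns are labelled by the elements 1, 2, 3 of the numeral type 3.\<close>

definition munit :: "3 \<Rightarrow> 3 \<Rightarrow> cmat3" where
  "munit i j = (\<chi> r s. if r = i \<and> s = j then 1 else 0)"

definition cscaleM :: "complex \<Rightarrow> cmat3 \<Rightarrow> cmat3" where
  "cscaleM c M = (\<chi> r s. c * M $ r $ s)"

fun mpow :: "cmat3 \<Rightarrow> nat \<Rightarrow> cmat3" where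
  "mpow A 0 = mat 1"
| "mpow A (Suc n) = A ** mpow A n"

definition mexp :: "cmat3 \<Rightarrow> cmat3" where
  "mexp A = (\<Sum>n. (1 / fact n) *\<^sub>R mpow A n)"

text \<open>For w > 0: (-w)^(1-nu) := e^(i pi (1-nu)) w^(1-nu).\<close>
definition negpow :: "real \<Rightarrow> real \<Rightarrow> complex" where
  "negpow w a = exp (\<i> * of_real pi * of_real a) * of_real (w powr a)"

definition admissible :: "real \<Rightarrow> real \<Rightarrow> bool" where
  "admissible \<nu> \<epsilon> \<longleftrightarrow> 0 < \<epsilon> \<and> \<epsilon> < 1 \<and>
     (\<exists>k::nat. k \<ge> 1 \<and> 1 / sqrt \<epsilon> - \<nu> = 2 * real k)"

definition gamma_ratio :: "real \<Rightarrow> real \<Rightarrow> complex" where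
  "gamma_ratio \<nu> \<epsilon> =
     Gamma (complex_of_real (1 / (2 * sqrt \<epsilon>) + \<nu> / 2)) * rGamma (complex_of_real \<nu>)
     * rGamma (complex_of_real (1 / (2 * sqrt \<epsilon>) - \<nu> / 2 + 1))"

definition dL2 :: "real \<Rightarrow> real \<Rightarrow> complex" where
  "dL2 \<nu> \<epsilon> = negpow (1 / (2 * sqrt \<epsilon>)) (1 - \<nu>) * gamma_ratio \<nu> \<epsilon>"

definition dR3 :: "real \<Rightarrow> real \<Rightarrow> complex" where
  "dR3 \<nu> \<epsilon> = - (1/2) * of_real ((1 / (2 * sqrt \<epsilon>)) powr (1 - \<nu>)) * gamma_ratio \<nu> \<epsilon>"

definition T_L :: "real \<Rightarrow> real \<Rightarrow> cmat3" where
  "T_L \<nu> \<epsilon> = cscaleM (dL2 \<nu> \<epsilon>) (munit 1 2)"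

definition T_R :: "real \<Rightarrow> real \<Rightarrow> cmat3" where
  "T_R \<nu> \<epsilon> = cscaleM (dR3 \<nu> \<epsilon>) (munit 1 3)"

definition St_pi :: "real \<Rightarrow> cmat3" where
  "St_pi \<nu> = mat 1 + cscaleM (- 2 * of_real pi * \<i> * exp (- of_real pi * \<i> * of_real \<nu>)
                                  * rGamma (complex_of_real \<nu>)) (munit 1 2)"

definition St_0 :: "real \<Rightarrow> cmat3" where
  "St_0 \<nu> = mat 1 + cscaleM (- of_real pi * \<i> * rGamma (complex_of_real \<nu>)) (munit 1 3)"

end

theory Submission imports Defs "HOL-Real_Asymp.Real_Asymp" begin

text \<open>For admissible \<open>\<epsilon>\<close> write \<open>1 / (2 sqrt \<epsilon>) = \<nu>/2 + k\<close> with \<open>k \<in> \<nat>\<close>; then the Gamma quotient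
  in \<open>d\<^sup>L\<^sub>2\<close> and \<open>d\<^sup>R\<^sub>3\<close> is \<open>(\<nu>)\<^sub>k / k!\<close>, and Euler's product for \<open>1/\<Gamma>\<close> shows that
  \<open>(\<nu>/2 + k) powr (1 - \<nu>) * (\<nu>)\<^sub>k / k!\<close> tends to \<open>1/\<Gamma>(\<nu>)\<close> as \<open>\<epsilon> \<rightarrow> 0\<close>, i.e. as \<open>k \<rightarrow> \<infinity>\<close>.
  Since \<open>T\<^sub>L\<close> and \<open>T\<^sub>R\<close> square to zero, \<open>exp (2\<pi>i T) = I + 2\<pi>i T\<close>, so the Stokes matrices
  are the entrywise limits.\<close>

lemma Gamma_times_rGamma_eq_pochhammer:
  fixes z :: "'a :: Gamma"
  assumes "z + of_nat n \<notin> \<int>\<^sub>\<le>\<^sub>0"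
  shows "Gamma (z + of_nat n) * rGamma z = pochhammer z n"
  using pochhammer_rGamma[of z n] assms
  by (simp add: rGamma_inverse_Gamma Gamma_eq_zero_iff field_simps)

lemma rGamma_Suc_of_nat: "rGamma (of_nat n + 1 :: 'a :: Gamma) = inverse (fact n)"
  using Gamma_fact[of n, where 'a='a] by (simp add: rGamma_inverse_Gamma add.commute)

lemma tendsto_shifted_powr_pochhammer_over_fact:
  fixes \<nu> c :: real
  shows "(\<lambda>n. of_real ((c + real n) powr (1 - \<nu>)) * pochhammer (complex_of_real \<nu>) n / fact n)
           \<longlonglongrightarrow> rGamma (complex_of_real \<nu>)"
proof -
  \<comment> \<open>\<open>h n\<close> is the ratio of our sequence to Euler's product \<open>rGamma_series \<nu> n = (\<nu>)\<^sub>n\<^sub>+\<^sub>1 / (n! n powr \<nu>)\<close>\<close>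
  define h where "h n = (c + real n) powr (1 - \<nu>) * real n powr \<nu> / (\<nu> + real n)" for n :: nat
  have "h \<longlonglongrightarrow> 1"
    unfolding h_def by real_asymp
  then have "(\<lambda>n. rGamma_series (complex_of_real \<nu>) n * of_real (h n)) \<longlonglongrightarrow> rGamma (of_real \<nu>)"
    using tendsto_mult[OF rGamma_series_LIMSEQ tendsto_of_real] by fastforce
  moreover have "eventually (\<lambda>n. rGamma_series (complex_of_real \<nu>) n * of_real (h n) =
      of_real ((c + real n) powr (1 - \<nu>)) * pochhammer (complex_of_real \<nu>) n / fact n) sequentially"
    using eventually_gt_at_top[of "nat \<lceil>\<bar>\<nu>\<bar>\<rceil>"]
  proof eventually_elim
    case (elim n)
    then have n: "real n > 0" "\<nu> + real n \<noteq> 0"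
      by linarith+
    then have "exp (complex_of_real \<nu> * of_real (ln (real n))) = of_real (real n powr \<nu>)"
      by (simp add: powr_def exp_of_real flip: of_real_mult)
    then have R: "rGamma_series (complex_of_real \<nu>) n
        = pochhammer (complex_of_real \<nu>) n * of_real (\<nu> + real n) / (fact n * of_real (real n powr \<nu>))"
      by (simp add: rGamma_series_def pochhammer_rec')
    moreover have H: "complex_of_real (h n) = of_real ((c + real n) powr (1 - \<nu>)) * of_real (real n powr \<nu>)
        / of_real (\<nu> + real n)"
      by (simp add: h_def)
    moreover have "complex_of_real (real n powr \<nu>) \<noteq> 0" "complex_of_real (\<nu> + real n) \<noteq> 0"
      using n by (simp, metis of_real_eq_0_iff)
    moreover have "p * d / (f * b) * (a * b / d) = a * p / f" if "b \<noteq> 0" "d \<noteq> 0" for p d f b a :: complex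
      using that by (simp add: field_simps)
    ultimately show ?case
      by simp
  qed
  ultimately show ?thesis
    by (rule Lim_transform_eventually)
qed

definition admissible_index :: "real \<Rightarrow> real \<Rightarrow> nat" where
  "admissible_index \<nu> \<epsilon> = nat \<lfloor>(1 / sqrt \<epsilon> - \<nu>) / 2\<rfloor>"

lemma admissible_half_inverse_sqrt:
  assumes "admissible \<nu> \<epsilon>"
  shows "1 / (2 * sqrt \<epsilon>) = \<nu> / 2 + real (admissible_index \<nu> \<epsilon>)"
proof -
  obtain k :: nat where k: "1 / sqrt \<epsilon> - \<nu> = 2 * real k"
    using assms by (auto simp: admissible_def)
  then have "admissible_index \<nu> \<epsilon> = k"
    by (simp add: admissible_index_def)
  with k show ?thesis
    by (simp add: field_simps)
qed

lemma filterlim_admissible_index: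
  "filterlim (admissible_index \<nu>) sequentially (at 0 within {\<epsilon>. admissible \<nu> \<epsilon>})"
proof -
  have "filterlim (\<lambda>\<epsilon>::real. (1 / sqrt \<epsilon> - \<nu>) / 2) at_top (at_right 0)"
    by real_asymp
  then have "filterlim (admissible_index \<nu>) sequentially (at_right 0)"
    unfolding admissible_index_def
    by (intro filterlim_compose[OF filterlim_nat_sequentially]
        filterlim_compose[OF filterlim_floor_sequentially])
  moreover have "at 0 within {\<epsilon>. admissible \<nu> \<epsilon>} \<le> at_right (0::real)"
    by (rule at_le) (auto simp: admissible_def)
  ultimately show ?thesis
    using filterlim_mono by blast
qed

lemma gamma_ratio_eq_pochhammer_over_fact:
  assumes "1 / (2 * sqrt \<epsilon>) = \<nu> / 2 + real k" and "\<nu> + real k > 0"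
  shows "gamma_ratio \<nu> \<epsilon> = pochhammer (complex_of_real \<nu>) k / fact k"
proof -
  have "\<nu> + real k \<notin> \<int>\<^sub>\<le>\<^sub>0"
    using assms(2) nonpos_Ints_nonpos by (meson not_le)
  then have "complex_of_real \<nu> + of_nat k \<notin> \<int>\<^sub>\<le>\<^sub>0"
    by (metis of_real_add of_real_in_nonpos_Ints_iff of_real_of_nat_eq)
  then have Gamma_rGamma: "Gamma (complex_of_real \<nu> + of_nat k) * rGamma (complex_of_real \<nu>)
      = pochhammer (complex_of_real \<nu>) k"
    by (rule Gamma_times_rGamma_eq_pochhammer)
  have "1 / (2 * sqrt \<epsilon>) + \<nu> / 2 = \<nu> + real k" "1 / (2 * sqrt \<epsilon>) - \<nu> / 2 + 1 = real k + 1"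
    using assms(1) by simp_all
  then have "gamma_ratio \<nu> \<epsilon> = Gamma (complex_of_real (\<nu> + real k)) * rGamma (complex_of_real \<nu>)
      * rGamma (complex_of_real (real k + 1))"
    unfolding gamma_ratio_def by (simp only:)
  also have "\<dots> = pochhammer (complex_of_real \<nu>) k / fact k"
    by (simp only: of_real_add of_real_of_nat_eq of_real_1 rGamma_Suc_of_nat Gamma_rGamma divide_inverse)
  finally show ?thesis .
qed

lemma tendsto_scaled_gamma_ratio:
  "((\<lambda>\<epsilon>. of_real ((1 / (2 * sqrt \<epsilon>)) powr (1 - \<nu>)) * gamma_ratio \<nu> \<epsilon>) \<longlongrightarrow> rGamma (complex_of_real \<nu>))
     (at 0 within {\<epsilon>. admissible \<nu> \<epsilon>})"
  (is "(?f \<longlongrightarrow> _) ?F")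
proof -
  let ?k = "admissible_index \<nu>"
  let ?g = "\<lambda>n. of_real ((\<nu> / 2 + real n) powr (1 - \<nu>)) * pochhammer (complex_of_real \<nu>) n / fact n"
  have "((\<lambda>\<epsilon>. ?g (?k \<epsilon>)) \<longlongrightarrow> rGamma (complex_of_real \<nu>)) ?F"
    by (rule filterlim_compose[OF tendsto_shifted_powr_pochhammer_over_fact filterlim_admissible_index])
  moreover have "eventually (\<lambda>\<epsilon>. admissible \<nu> \<epsilon> \<and> ?k \<epsilon> > nat \<lceil>\<bar>\<nu>\<bar>\<rceil>) ?F"
    by (intro eventually_conj eventually_compose_filterlim[OF _ filterlim_admissible_index])
      (simp_all add: eventually_at_filter)
  then have "eventually (\<lambda>\<epsilon>. ?g (?k \<epsilon>) = ?f \<epsilon>) ?F"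
  proof eventually_elim
    case (elim \<epsilon>)
    then have adm: "admissible \<nu> \<epsilon>" and "\<nu> + real (?k \<epsilon>) > 0"
      by linarith+
    then have "gamma_ratio \<nu> \<epsilon> = pochhammer (complex_of_real \<nu>) (?k \<epsilon>) / fact (?k \<epsilon>)"
      by (intro gamma_ratio_eq_pochhammer_over_fact admissible_half_inverse_sqrt)
    then show ?case
      by (simp only: admissible_half_inverse_sqrt[OF adm] times_divide_eq_right)
  qed
  ultimately show ?thesis
    by (rule Lim_transform_eventually)
qed

lemma tendsto_dL2:
  "(dL2 \<nu> \<longlongrightarrow> - exp (- of_real pi * \<i> * of_real \<nu>) * rGamma (complex_of_real \<nu>))
     (at 0 within {\<epsilon>. admissible \<nu> \<epsilon>})"
proof -
  have "(dL2 \<nu> \<longlongrightarrow> exp (\<i> * of_real pi * of_real (1 - \<nu>)) * rGamma (complex_of_real \<nu>))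
      (at 0 within {\<epsilon>. admissible \<nu> \<epsilon>})"
    unfolding dL2_def negpow_def mult.assoc
    by (rule tendsto_mult_left tendsto_scaled_gamma_ratio)+
  moreover have "exp (\<i> * of_real pi * of_real (1 - \<nu>)) = - exp (- of_real pi * \<i> * of_real \<nu>)"
    by (simp add: algebra_simps exp_diff exp_minus divide_inverse)
  ultimately show ?thesis
    by simp
qed

lemma tendsto_dR3:
  "(dR3 \<nu> \<longlongrightarrow> - (1/2) * rGamma (complex_of_real \<nu>)) (at 0 within {\<epsilon>. admissible \<nu> \<epsilon>})"
  unfolding dR3_def mult.assoc
  by (rule tendsto_mult_left tendsto_scaled_gamma_ratio)+

lemma cscaleM_cscaleM: "cscaleM c (cscaleM d M) = cscaleM (c * d) M"
  by (simp add: cscaleM_def vec_eq_iff)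

lemma tendsto_cscaleM:
  assumes "(f \<longlongrightarrow> a) F"
  shows "((\<lambda>x. cscaleM (f x) M) \<longlongrightarrow> cscaleM a M) F"
  unfolding cscaleM_def
  by (intro vec_tendstoI) (simp add: assms tendsto_mult_right)

lemma cscaleM_munit_square_zero:
  assumes "i \<noteq> j"
  shows "cscaleM c (munit i j) ** cscaleM c (munit i j) = 0"
  using assms by (simp add: cscaleM_def munit_def matrix_matrix_mult_def vec_eq_iff
      if_distrib[of "\<lambda>x. _ * x"] cong: if_cong)

lemma mexp_square_zero:
  assumes "A ** A = 0"
  shows "mexp A = mat 1 + A"
proof -
  have "mpow A n = 0" if "n \<ge> 2" for n
  proof -
    obtain m where "n = Suc (Suc m)"
      using \<open>n \<ge> 2\<close> by (metis add_2_eq_Suc le_add_diff_inverse)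
    then show ?thesis
      by (simp add: matrix_mul_assoc assms)
  qed
  then have "mexp A = (\<Sum>n\<in>{0,1}. (1 / fact n) *\<^sub>R mpow A n)"
    unfolding mexp_def by (intro suminf_finite) auto
  then show ?thesis
    by simp
qed

lemma mexp_cscaleM_munit:
  assumes "i \<noteq> j"
  shows "mexp (cscaleM c (cscaleM d (munit i j))) = mat 1 + cscaleM (c * d) (munit i j)"
  by (simp add: cscaleM_cscaleM mexp_square_zero cscaleM_munit_square_zero assms)

theorem mainTheorem1:
  fixes \<nu> :: real
  shows "((\<lambda>\<epsilon>. mexp (cscaleM (2 * of_real pi * \<i>) (T_L \<nu> \<epsilon>))) \<longlongrightarrow> St_pi \<nu>)
            (at 0 within {\<epsilon>. admissible \<nu> \<epsilon>})
       \<and> ((\<lambda>\<epsilon>. mexp (cscaleM (2 * of_real pi * \<i>) (T_R \<nu> \<epsilon>))) \<longlongrightarrow> St_0 \<nu>)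
            (at 0 within {\<epsilon>. admissible \<nu> \<epsilon>})"
proof
  let ?c = "2 * of_real pi * \<i> :: complex"
  let ?F = "at 0 within {\<epsilon>. admissible \<nu> \<epsilon>}"
  have exp_T_L: "mexp (cscaleM ?c (T_L \<nu> \<epsilon>)) = mat 1 + cscaleM (?c * dL2 \<nu> \<epsilon>) (munit 1 2)" for \<epsilon>
    unfolding T_L_def by (rule mexp_cscaleM_munit) simp
  have coeff_L: "?c * (- exp (- of_real pi * \<i> * of_real \<nu>) * rGamma (complex_of_real \<nu>))
      = - 2 * of_real pi * \<i> * exp (- of_real pi * \<i> * of_real \<nu>) * rGamma (complex_of_real \<nu>)"
    by (simp only: mult_minus_left mult_minus_right mult.assoc)
  show "((\<lambda>\<epsilon>. mexp (cscaleM ?c (T_L \<nu> \<epsilon>))) \<longlongrightarrow> St_pi \<nu>) ?F"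
    using tendsto_mult_left[OF tendsto_dL2[of \<nu>], of ?c] unfolding exp_T_L St_pi_def coeff_L
    by (intro tendsto_add tendsto_const tendsto_cscaleM)
  have exp_T_R: "mexp (cscaleM ?c (T_R \<nu> \<epsilon>)) = mat 1 + cscaleM (?c * dR3 \<nu> \<epsilon>) (munit 1 3)" for \<epsilon>
    unfolding T_R_def by (rule mexp_cscaleM_munit) simp
  have coeff_R: "?c * (- (1/2) * rGamma (complex_of_real \<nu>)) = - of_real pi * \<i> * rGamma (complex_of_real \<nu>)"
    by simp
  show "((\<lambda>\<epsilon>. mexp (cscaleM ?c (T_R \<nu> \<epsilon>))) \<longlongrightarrow> St_0 \<nu>) ?F"
    using tendsto_mult_left[OF tendsto_dR3[of \<nu>], of ?c] unfolding exp_T_R St_0_def coeff_R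
    by (intro tendsto_add tendsto_const tendsto_cscaleM)
qed

end
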